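(* Consider the predator–prey system with predator-only harvesting $$\dot X=(1-Y)X,\qquad \dot Y=(X-U)Y,$$ on the open quadrant $\{(X,Y): X>0,\ Y>0\}$, under the feedback $U=Y$. Define $$V(X,Y)=\Psi(X)+\Psi(Y)+\Psi(1/X)+\Psi(Y/X)=\frac{(X-1)^2}{X}+Y-1-\ln Y+\frac{Y}{X}-1-\ln\!\Big(\frac{Y}{X}\Big).$$ Then $V$ is positive definite with respect to the equilibrium $(X,Y)=(1,1)$ (i.e. $V(1,1)=0$ and $V>0$ elsewhere on the quadrant), radially unbounded on the quadrant (i.e. $V(X,Y)\to\infty$ as $(X,Y)$ approaches the boundary $\{X=0\}\cup\{Y=0\}$ or as $X+Y\to\infty$), and along the closed-loop solutions $$\dot V=-\frac{(X-1)^2}{X}-(Y-1)^2,$$ which is negative definite on the quadrant. Hence $V$ is a strict Lyapunov function (strict CLF) for the closed loop on $\{X>0,Y>0\}$.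
   Context: $\Psi(S)=S-1-\ln S$ for $S>0$ (the Volterra Lyapunov building block); $\Psi(1)=0$ and $\Psi(S)>0$ for $S\neq1$. $X$ is the prey concentration, $Y$ the predator concentration, $U$ the harvesting rate. *)

theory Defs
  imports Complex_Main
begin

definition Psi :: "real \<Rightarrow> real" where
  "Psi S = S - 1 - ln S"

definition V :: "real \<Rightarrow> real \<Rightarrow> real" where
  "V X Y = Psi X + Psi Y + Psi (1 / X) + Psi (Y / X)"

end

theory Submission
  imports Defs
begin

text \<open>Since \<open>ln S \<le> S - 1\<close> with equality only at \<open>S = 1\<close>, each \<open>\<Psi>\<close>-term of \<open>V\<close> is
  nonnegative, and \<open>\<Psi> X + \<Psi> (1/X) = (X - 1)\<^sup>2/X\<close>, so \<open>V\<close> vanishes only at \<open>(1, 1)\<close>.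
  The lower bounds \<open>\<Psi> X + \<Psi> (1/X) \<ge> 1/X - 2\<close>, \<open>\<Psi> Y \<ge> -1 - ln Y\<close> and
  \<open>\<Psi> Y \<ge> Y/2 - 1\<close> make \<open>V\<close> blow up at each part of the boundary of the quadrant.
  Along the closed loop the chain rule gives \<open>dV/dt\<close> directly; with \<open>U = Y\<close> the
  indefinite cross terms cancel and only the two negative squares remain.\<close>

lemma Psi_nonneg: "S > 0 \<Longrightarrow> Psi S \<ge> 0"
  unfolding Psi_def using ln_le_minus_one[of S] by simp

lemma Psi_pos: "S > 0 \<Longrightarrow> S \<noteq> 1 \<Longrightarrow> Psi S > 0"
  unfolding Psi_def using ln_diff_less[of S 1] by simp

lemma Psi_ge_neg_ln: "S \<ge> 0 \<Longrightarrow> Psi S \<ge> -1 - ln S"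
  unfolding Psi_def by simp

lemma Psi_ge_half: "S > 0 \<Longrightarrow> Psi S \<ge> S / 2 - 1"
proof -
  assume S: "S > 0"
  have "ln S = ln (S / 2) + ln 2" using S by (simp add: ln_div)
  also have "\<dots> \<le> (S / 2 - 1) + (2 - 1)"
    using ln_le_minus_one[of "S / 2"] ln_le_minus_one[of 2] S by (intro add_mono) simp_all
  finally show ?thesis unfolding Psi_def by simp
qed

lemma Psi_add_Psi_inverse: "X > 0 \<Longrightarrow> Psi X + Psi (1 / X) = (X - 1)^2 / X"
  unfolding Psi_def by (simp add: ln_div field_simps power2_eq_square)

lemma square_div_eq: "(X::real) > 0 \<Longrightarrow> (X - 1)^2 / X = X + 1 / X - 2"
  by (simp add: field_simps power2_eq_square)

lemma V_eq: "X > 0 \<Longrightarrow> V X Y = (X - 1)^2 / X + Psi Y + Psi (Y / X)"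
  unfolding V_def using Psi_add_Psi_inverse[of X] by simp

lemma V_pos:
  assumes X: "X > 0" and Y: "Y > 0" and ne: "(X, Y) \<noteq> (1, 1)"
  shows "V X Y > 0"
proof -
  have "(X - 1)^2 / X \<ge> 0" "Psi Y \<ge> 0" "Psi (Y / X) \<ge> 0"
    using X Y Psi_nonneg by simp_all
  moreover have "(X - 1)^2 / X > 0 \<or> Psi Y > 0"
    using ne X Psi_pos[OF Y] by auto
  ultimately show ?thesis using V_eq[OF X, of Y] by linarith
qed

lemma V_lower_bounds:
  assumes X: "X > 0" and Y: "Y > 0"
  shows "V X Y \<ge> 1 / X - 2" "V X Y \<ge> -1 - ln Y" "V X Y \<ge> (X + Y) / 2 - 3"
proof -
  have V: "V X Y \<ge> X + 1 / X - 2 + Psi Y"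
    using V_eq[OF X] square_div_eq[OF X] Psi_nonneg[of "Y / X"] X Y by simp
  have "X + 1 / X - 2 \<ge> 0" using square_div_eq[OF X] X by (metis zero_le_power2 divide_nonneg_pos)
  moreover have "Psi Y \<ge> 0" using Psi_nonneg[OF Y] .
  moreover have "X + 1 / X - 2 \<ge> X - 2" using X by simp
  ultimately show "V X Y \<ge> 1 / X - 2" "V X Y \<ge> -1 - ln Y" "V X Y \<ge> (X + Y) / 2 - 3"
    using V X Psi_ge_neg_ln[OF less_imp_le[OF Y]] Psi_ge_half[OF Y] by argo+
qed

lemma V_radially_unbounded:
  "\<exists>\<delta>>0. \<forall>X Y. X > 0 \<longrightarrow> Y > 0 \<longrightarrow> (X < \<delta> \<or> Y < \<delta> \<or> X + Y > 1 / \<delta>) \<longrightarrow> V X Y > M"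
proof -
  define \<delta> where "\<delta> = min (exp (- (M + 1))) (1 / (2 * \<bar>M\<bar> + 6))"
  have \<delta>_pos: "\<delta> > 0" unfolding \<delta>_def by simp
  have ln_\<delta>: "ln \<delta> \<le> - (M + 1)"
  proof -
    have "\<delta> \<le> exp (- (M + 1))" unfolding \<delta>_def by simp
    then show ?thesis using \<delta>_pos by (metis ln_exp ln_le_cancel_iff exp_gt_zero)
  qed
  have inv_\<delta>: "1 / \<delta> \<ge> 2 * \<bar>M\<bar> + 6"
  proof -
    have "\<delta> \<le> 1 / (2 * \<bar>M\<bar> + 6)" unfolding \<delta>_def by simp
    then show ?thesis using \<delta>_pos by (simp add: field_simps)
  qed
  have "V X Y > M" if X: "X > 0" and Y: "Y > 0" and boundary: "X < \<delta> \<or> Y < \<delta> \<or> X + Y > 1 / \<delta>" for X Y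
  proof -
    have "1 / X > 1 / \<delta> \<or> ln Y < ln \<delta> \<or> X + Y > 1 / \<delta>"
      using boundary X Y by (auto simp: frac_less2)
    then show ?thesis
      using V_lower_bounds[OF X Y] ln_\<delta> inv_\<delta> abs_ge_self[of M] by argo
  qed
  with \<delta>_pos show ?thesis by blast
qed

lemma V_closed_loop_derivative:
  assumes "x t > 0" "y t > 0"
    and "(x has_real_derivative (1 - y t) * x t) (at t)"
    and "(y has_real_derivative (x t - y t) * y t) (at t)"
  shows "((\<lambda>s. V (x s) (y s)) has_real_derivative - ((x t - 1)^2 / x t) - (y t - 1)^2) (at t)"
  unfolding V_def Psi_def
  using assms
  by (auto intro!: derivative_eq_intros simp: field_simps power2_eq_square)

lemma closed_loop_dissipation_neg:
  assumes "X > 0" and "(X, Y) \<noteq> (1, 1)"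
  shows "- ((X - 1)^2 / X) - (Y - 1)^2 < (0::real)"
proof -
  have "(X - 1)^2 / X > 0 \<or> (Y - 1)^2 > 0" using assms by auto
  moreover have "(X - 1)^2 / X \<ge> 0" "(Y - 1)^2 \<ge> 0" using assms by simp_all
  ultimately show ?thesis by linarith
qed

theorem theorem1:
  shows
    "(\<forall>X Y. X > 0 \<longrightarrow> Y > 0 \<longrightarrow>
        V X Y = (X - 1)^2 / X + Y - 1 - ln Y + Y / X - 1 - ln (Y / X))
     \<and> V 1 1 = 0
     \<and> (\<forall>X Y. X > 0 \<longrightarrow> Y > 0 \<longrightarrow> (X, Y) \<noteq> (1, 1) \<longrightarrow> V X Y > 0)
     \<and> (\<forall>M. \<exists>\<delta>>0. \<forall>X Y. X > 0 \<longrightarrow> Y > 0 \<longrightarrow>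
          (X < \<delta> \<or> Y < \<delta> \<or> X + Y > 1 / \<delta>) \<longrightarrow> V X Y > M)
     \<and> (\<forall>(x :: real \<Rightarrow> real) (y :: real \<Rightarrow> real) (U :: real \<Rightarrow> real) t.
          (\<forall>s. U s = y s) \<longrightarrow> x t > 0 \<longrightarrow> y t > 0 \<longrightarrow>
          (x has_real_derivative (1 - y t) * x t) (at t) \<longrightarrow>
          (y has_real_derivative (x t - U t) * y t) (at t) \<longrightarrow>
          ((\<lambda>s. V (x s) (y s)) has_real_derivative
              (- ((x t - 1)^2 / x t) - (y t - 1)^2)) (at t))
     \<and> (\<forall>X Y. X > 0 \<longrightarrow> Y > 0 \<longrightarrow> (X, Y) \<noteq> (1, 1) \<longrightarrow>
          - ((X - 1)^2 / X) - (Y - 1)^2 < (0::real))"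
  using V_eq V_pos V_radially_unbounded V_closed_loop_derivative closed_loop_dissipation_neg
  by (auto simp: V_def Psi_def)

end
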